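(* Let $\mathbf i$ and $\mathbf i'$ be reduced expressions of $w_0$ related by a braid move at positions $k,k+1,k+2$ (i.e. $i_k=i_{k+2}=p$, $i_{k+1}=q$, $i'_k=i'_{k+2}=q$, $i'_{k+1}=p$, $i'_j=i_j$ otherwise, with $p\cdot q=-1$), and assume the standard seed $\mathcal S^{\mathbf i}$ satisfies properties (A), (B), (C). Define $P'_j:=P_{\mathbf s(j)}$ for $j\ne k$, where $\mathbf s$ is the transposition of $k+1$ and $k+2$, and $P'_k:=\tilde P_k/(\beta_{k+1}P_k)$ with $\tilde P_k:=\beta_kP_{\mathrm{in}(k)}$. Then for every $1\le i\le N$ and every $j\in J_{ex}(\mathbf i')$, $$(\beta'_i;P'_j)-(\beta'_i;P'_{j_+(\mathbf i')})\le1.$$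
   Context: $\mathfrak g$ is a complex simple Lie algebra of simply-laced type, vertex set $I=\{1,\dots,n\}$, Cartan entries $i\cdot j$, Weyl group with simple reflections $s_i$, longest element $w_0$, $N=\ell(w_0)$, fundamental weights $\omega_i$. $\overline D:\mathbb C[\mathsf N]\to\mathbb C(\alpha_1,\dots,\alpha_n)$ is the algebra morphism $\overline D(f)=\sum_{\mathbf j}(f,e_{j_1}\cdots e_{j_r})\big(\alpha_{j_1}(\alpha_{j_1}+\alpha_{j_2})\cdots(\alpha_{j_1}+\dots+\alpha_{j_r})\big)^{-1}$ ($\mathbb C[\mathsf N]$ identified with the graded dual of $U(\mathfrak n)$, $e_i$ Chevalley generators, $\alpha_i$ indeterminates). Positive roots are linear forms in the $\alpha_i$; $(\beta;P)$ = multiplicity of $\beta$ in $P$. For a reduced expression $\mathbf i$: $\beta_j=s_{i_1}\cdots s_{i_{j-1}}(\alpha_{i_j})$ (and $\beta'_j$ likewise for $\mathbf i'$); $j_-(\mathbf i)=\max(\{l<j:i_l=i_j\}\cup\{0\})$; $j_+(\mathbf i)=\min(\{l>j:i_l=i_j\}\cup\{N+1\})$; $J_{ex}(\mathbf i)=\{j:j_+(\mathbf i)\le N\}$; flag minors $x_j=D(s_{i_1}\cdots s_{i_j}\omega_{i_j},\omega_{i_j})$. The quiver $Q^{\mathbf i}$ on $\{1,\dots,N\}$ has an ordinary arrow $u\to v$ iff $i_u\cdot i_v=-1$ and $u<v<u_+<v_+$, and a horizontal arrow $u_+\to u$ for $u\in J_{ex}$; $P_{\mathrm{in}(j)}:=P_{j_+}\prod_{l\in\mathrm{inord}(j)}P_l$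 with $\mathrm{inord}(j)$ the sources of ordinary arrows into $j$. Properties: (A) $\overline D(x_j)=1/P_j$ with $P_j$ a product of positive roots; (B) $P_jP_{j_-}=\beta_j\prod_{l<j<l_+,\,i_l\cdot i_j=-1}P_l$ for all $j$, $P_0=1$; (C) $(\beta_i;P_j)-(\beta_i;P_{j_+})\le1$ for $j\in J_{ex}$, $1\le i\le N$. *)

theory Defs
  imports Main "HOL.Real"
begin

text \<open>Root lattice vectors: linear forms in the indeterminates alpha_1..alpha_n,
  represented by their integer coefficient functions (only indices 1..n matter).\<close>
type_synonym rvec = "nat \<Rightarrow> int"

definition simply_laced_cartan :: "nat \<Rightarrow> (nat \<Rightarrow> nat \<Rightarrow> int) \<Rightarrow> bool" where
  "simply_laced_cartan n C \<longleftrightarrow>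
     1 \<le> n \<and>
     (\<forall>i\<in>{1..n}. C i i = 2) \<and>
     (\<forall>i\<in>{1..n}. \<forall>j\<in>{1..n}. C i j = C j i) \<and>
     (\<forall>i\<in>{1..n}. \<forall>j\<in>{1..n}. i \<noteq> j \<longrightarrow> C i j = 0 \<or> C i j = -1) \<and>
     (\<forall>i\<in>{1..n}. \<forall>j\<in>{1..n}.
        (i, j) \<in> ({(a, b). a \<in> {1..n} \<and> b \<in> {1..n} \<and> C a b = -1})\<^sup>*) \<and>
     (\<forall>v :: nat \<Rightarrow> real. (\<exists>i\<in>{1..n}. v i \<noteq> 0) \<longrightarrow>
        (\<Sum>i\<in>{1..n}. \<Sum>j\<in>{1..n}. v i * of_int (C i j) * v j) > 0)"

definition simple_root :: "nat \<Rightarrow> rvec" where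
  "simple_root i = (\<lambda>j. if j = i then 1 else 0)"

text \<open>Simple reflection s_i(v) = v - (v . alpha_i) alpha_i.\<close>
definition srefl :: "nat \<Rightarrow> (nat \<Rightarrow> nat \<Rightarrow> int) \<Rightarrow> nat \<Rightarrow> rvec \<Rightarrow> rvec" where
  "srefl n C i v = (\<lambda>j. if j = i then v j - (\<Sum>l\<in>{1..n}. v l * C l i) else v j)"

definition wact :: "nat \<Rightarrow> (nat \<Rightarrow> nat \<Rightarrow> int) \<Rightarrow> nat list \<Rightarrow> rvec \<Rightarrow> rvec" where
  "wact n C w = foldr (\<lambda>i f. srefl n C i \<circ> f) w id"

definition words :: "nat \<Rightarrow> nat list set" where
  "words n = {w. set w \<subseteq> {1..n}}"

text \<open>Weyl group, realised faithfully on the root lattice.\<close>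
definition weyl :: "nat \<Rightarrow> (nat \<Rightarrow> nat \<Rightarrow> int) \<Rightarrow> (rvec \<Rightarrow> rvec) set" where
  "weyl n C = wact n C ` words n"

definition ell :: "nat \<Rightarrow> (nat \<Rightarrow> nat \<Rightarrow> int) \<Rightarrow> (rvec \<Rightarrow> rvec) \<Rightarrow> nat" where
  "ell n C g = (LEAST r. \<exists>w\<in>words n. length w = r \<and> wact n C w = g)"

definition w0 :: "nat \<Rightarrow> (nat \<Rightarrow> nat \<Rightarrow> int) \<Rightarrow> (rvec \<Rightarrow> rvec)" where
  "w0 n C = (THE g. g \<in> weyl n C \<and> (\<forall>h\<in>weyl n C. ell n C h \<le> ell n C g))"

definition NN :: "nat \<Rightarrow> (nat \<Rightarrow> nat \<Rightarrow> int) \<Rightarrow> nat" where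
  "NN n C = ell n C (w0 n C)"

definition reduced_expr_w0 :: "nat \<Rightarrow> (nat \<Rightarrow> nat \<Rightarrow> int) \<Rightarrow> nat list \<Rightarrow> bool" where
  "reduced_expr_w0 n C ii \<longleftrightarrow>
     ii \<in> words n \<and> wact n C ii = w0 n C \<and> length ii = NN n C"

definition roots :: "nat \<Rightarrow> (nat \<Rightarrow> nat \<Rightarrow> int) \<Rightarrow> rvec set" where
  "roots n C = {wact n C w (simple_root i) | w i. w \<in> words n \<and> i \<in> {1..n}}"

definition pos_roots :: "nat \<Rightarrow> (nat \<Rightarrow> nat \<Rightarrow> int) \<Rightarrow> rvec set" where
  "pos_roots n C = {b \<in> roots n C. \<forall>j. 0 \<le> b j}"

definition letter :: "nat list \<Rightarrow> nat \<Rightarrow> nat" where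
  "letter ii j = ii ! (j - 1)"

definition beta :: "nat \<Rightarrow> (nat \<Rightarrow> nat \<Rightarrow> int) \<Rightarrow> nat list \<Rightarrow> nat \<Rightarrow> rvec" where
  "beta n C ii j = wact n C (take (j - 1) ii) (simple_root (letter ii j))"

definition jminus :: "nat list \<Rightarrow> nat \<Rightarrow> nat" where
  "jminus ii j = Max ({l. 1 \<le> l \<and> l < j \<and> letter ii l = letter ii j} \<union> {0})"

definition jplus :: "nat list \<Rightarrow> nat \<Rightarrow> nat" where
  "jplus ii j = Min ({l. j < l \<and> l \<le> length ii \<and> letter ii l = letter ii j} \<union> {length ii + 1})"

definition Jex :: "nat list \<Rightarrow> nat set" where
  "Jex ii = {j. 1 \<le> j \<and> j \<le> length ii \<and> jplus ii j \<le> length ii}"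

text \<open>Sources of ordinary arrows u -> j in the quiver Q^i.\<close>
definition inord :: "(nat \<Rightarrow> nat \<Rightarrow> int) \<Rightarrow> nat list \<Rightarrow> nat \<Rightarrow> nat set" where
  "inord C ii j = {u. 1 \<le> u \<and> C (letter ii u) (letter ii j) = -1 \<and>
                       u < j \<and> j < jplus ii u \<and> jplus ii u < jplus ii j}"

text \<open>A rational function which is a product of (positive) roots is represented by its
  multiplicity function: P beta = (beta; P).  Products become sums, quotients differences.\<close>
type_synonym rprod = "rvec \<Rightarrow> int"

definition delta_root :: "rvec \<Rightarrow> rprod" where
  "delta_root b = (\<lambda>c. if c = b then 1 else 0)"

text \<open>Properties (A) (only the part "P_j is a product of positive roots", with P_0 = 1),
  (B) and (C) of the family P_0, ..., P_N attached to the seed S^i.\<close>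
definition seed_props :: "nat \<Rightarrow> (nat \<Rightarrow> nat \<Rightarrow> int) \<Rightarrow> nat list \<Rightarrow> (nat \<Rightarrow> rprod) \<Rightarrow> bool" where
  "seed_props n C ii P \<longleftrightarrow>
     P 0 = (\<lambda>_. 0) \<and>
     (\<forall>j\<in>{1..length ii}. (\<forall>b. 0 \<le> P j b) \<and> finite {b. P j b \<noteq> 0} \<and>
         {b. P j b \<noteq> 0} \<subseteq> pos_roots n C) \<and>
     (\<forall>j\<in>{1..length ii}. \<forall>b.
        P j b + P (jminus ii j) b =
          delta_root (beta n C ii j) b +
          (\<Sum>l\<in>{l. 1 \<le> l \<and> l < j \<and> j < jplus ii l \<and>
                     C (letter ii l) (letter ii j) = -1}. P l b)) \<and>
     (\<forall>j\<in>Jex ii. \<forall>i\<in>{1..length ii}.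
        P j (beta n C ii i) - P (jplus ii j) (beta n C ii i) \<le> 1)"

definition braid_move :: "(nat \<Rightarrow> nat \<Rightarrow> int) \<Rightarrow> nat list \<Rightarrow> nat list \<Rightarrow> nat \<Rightarrow> nat \<Rightarrow> nat \<Rightarrow> bool" where
  "braid_move C ii ii' k p q \<longleftrightarrow>
     length ii' = length ii \<and> 1 \<le> k \<and> k + 2 \<le> length ii \<and> C p q = -1 \<and>
     letter ii k = p \<and> letter ii (k+1) = q \<and> letter ii (k+2) = p \<and>
     letter ii' k = q \<and> letter ii' (k+1) = p \<and> letter ii' (k+2) = q \<and>
     (\<forall>j\<in>{1..length ii}. j \<notin> {k, k+1, k+2} \<longrightarrow> letter ii' j = letter ii j)"

definition swp :: "nat \<Rightarrow> nat \<Rightarrow> nat" where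
  "swp k j = (if j = k + 1 then k + 2 else if j = k + 2 then k + 1 else j)"

definition Pnew :: "nat \<Rightarrow> (nat \<Rightarrow> nat \<Rightarrow> int) \<Rightarrow> nat list \<Rightarrow> (nat \<Rightarrow> rprod) \<Rightarrow> nat \<Rightarrow> nat \<Rightarrow> rprod" where
  "Pnew n C ii P k j =
     (if j = k then
        (\<lambda>b. delta_root (beta n C ii k) b + P (jplus ii k) b + (\<Sum>l\<in>inord C ii k. P l b)
             - delta_root (beta n C ii (k+1)) b - P k b)
      else P (swp k j))"

end

theory Submission
  imports Defs
begin

(*
  The roots of ii' are those of ii with beta_k and beta_(k+2) exchanged, so property (C) of the
  old seed is available at every root beta'_i.  Away from the window k, k+1, k+2 the successor map
  j |-> j_+ of ii' is conjugate under the transposition s to that of ii, and (C) transfers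
  verbatim.  The three remaining differences, P'_k - P'_(k+2), P'_m - P'_k and P'_(j0) - P'_(k+1)
  (with m and j0 the last occurrences of q and p before the window), are rewritten by the
  exchange relations (B) at k and k+2 as P_(l_-) - P_l + delta_(beta_z) - delta_(beta_w) with
  l_- < z.  At the root beta_z the term P_(l_-) vanishes, since P_j only involves
  beta_1, ..., beta_j and a reduced word has distinct roots; at any other root (C) bounds
  P_(l_-) - P_l.
*)

section \<open>Reflections and reduced words\<close>

lemma split_list_at_two:
  assumes "i < j" "j < length xs"
  obtains X Y Z where "xs = X @ xs ! i # Y @ xs ! j # Z" "length X = i" "length Y = j - Suc i"
proof
  let ?X = "take i xs" and ?Y = "take (j - Suc i) (drop (Suc i) xs)" and ?Z = "drop (Suc j) xs"
  have "drop (Suc i) xs = ?Y @ drop (j - Suc i) (drop (Suc i) xs)"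
    by (rule append_take_drop_id[symmetric])
  also have "drop (j - Suc i) (drop (Suc i) xs) = xs ! j # ?Z"
    using assms by (simp add: Cons_nth_drop_Suc)
  finally show "xs = ?X @ xs ! i # ?Y @ xs ! j # ?Z"
    using assms by (metis append.assoc append_Cons id_take_nth_drop less_trans)
  show "length ?X = i" "length ?Y = j - Suc i"
    using assms by auto
qed

definition pairing :: "nat \<Rightarrow> (nat \<Rightarrow> nat \<Rightarrow> int) \<Rightarrow> rvec \<Rightarrow> rvec \<Rightarrow> int" where
  "pairing n C v w = (\<Sum>l\<in>{1..n}. \<Sum>m\<in>{1..n}. v l * C l m * w m)"

definition reflection :: "nat \<Rightarrow> (nat \<Rightarrow> nat \<Rightarrow> int) \<Rightarrow> rvec \<Rightarrow> rvec \<Rightarrow> rvec" where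
  "reflection n C b v = (\<lambda>j. v j - pairing n C v b * b j)"

locale cartan =
  fixes n :: nat and C :: "nat \<Rightarrow> nat \<Rightarrow> int"
  assumes cartan_diag: "i \<in> {1..n} \<Longrightarrow> C i i = 2"
    and cartan_sym: "i \<in> {1..n} \<Longrightarrow> j \<in> {1..n} \<Longrightarrow> C i j = C j i"
begin

abbreviation "B \<equiv> pairing n C"
abbreviation "R \<equiv> reflection n C"
abbreviation "S \<equiv> srefl n C"
abbreviation "W \<equiv> wact n C"

lemma pairing_sym: "B v w = B w v"
  unfolding pairing_def
  by (subst sum.swap) (auto intro!: sum.cong simp: cartan_sym mult_ac)

lemma pairing_diff_left: "B (\<lambda>j. v j - c * w j) u = B v u - c * B w u"
  unfolding pairing_def by (simp add: algebra_simps sum_subtractf sum_distrib_left)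

lemma pairing_diff_right: "B u (\<lambda>j. v j - c * w j) = B u v - c * B u w"
  using pairing_diff_left pairing_sym by metis

lemma pairing_simple_root:
  assumes "i \<in> {1..n}" shows "B v (simple_root i) = (\<Sum>l\<in>{1..n}. v l * C l i)"
proof -
  have "(\<Sum>m\<in>{1..n}. v l * C l m * simple_root i m) = v l * C l i" for l
    using assms by (simp add: simple_root_def if_distrib cong: if_cong)
  then show ?thesis unfolding pairing_def by simp
qed

lemma pairing_simple_roots:
  assumes "i \<in> {1..n}" "j \<in> {1..n}" shows "B (simple_root i) (simple_root j) = C i j"
  using assms by (simp add: pairing_simple_root) (simp add: simple_root_def of_bool_def[symmetric])

lemma srefl_eq_reflection: "i \<in> {1..n} \<Longrightarrow> S i = R (simple_root i)"
  by (simp add: fun_eq_iff srefl_def reflection_def pairing_simple_root) (simp add: simple_root_def)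

lemma reflection_diff: "R b (\<lambda>j. v j - c * w j) = (\<lambda>j. R b v j - c * R b w j)"
  by (simp add: reflection_def pairing_diff_left fun_eq_iff algebra_simps)

lemma reflection_pairing: "B b b = 2 \<Longrightarrow> B (R b v) (R b w) = B v w"
  unfolding reflection_def by (simp add: pairing_diff_left pairing_diff_right pairing_sym[of b w])

lemma reflection_involutive:
  assumes "B b b = 2" shows "R b (R b v) = v"
proof -
  have "B (R b v) b = - B v b"
    unfolding reflection_def using pairing_diff_left[of v "B v b" b b] assms by simp
  then show ?thesis by (simp add: reflection_def fun_eq_iff)
qed

lemma reflection_uminus: "R (\<lambda>j. - b j) = R b"
  by (simp add: fun_eq_iff reflection_def pairing_def sum_negf)

lemma reflection_conj:
  assumes "B a a = 2" shows "R a (R b v) = R (R a b) (R a v)"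
  using reflection_diff[of a v "B v b" b] reflection_pairing[OF assms, of v b]
  by (simp add: reflection_def[of n C b] reflection_def[of n C "R a b"])

lemma wact_Nil [simp]: "W [] = id"
  by (simp add: wact_def)

lemma wact_Cons [simp]: "W (a # w) = S a \<circ> W w"
  by (simp add: wact_def)

lemma wact_append: "W (xs @ ys) = W xs \<circ> W ys"
  by (induction xs) auto

lemma pairing_simple_root_self: "i \<in> {1..n} \<Longrightarrow> B (simple_root i) (simple_root i) = 2"
  by (simp add: pairing_simple_roots cartan_diag)

lemma srefl_involutive: "i \<in> {1..n} \<Longrightarrow> S i (S i v) = v"
  by (simp add: srefl_eq_reflection reflection_involutive pairing_simple_root_self)

lemma srefl_simple_root_self: "i \<in> {1..n} \<Longrightarrow> S i (simple_root i) = (\<lambda>j. - simple_root i j)"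
  by (simp add: srefl_eq_reflection reflection_def pairing_simple_root_self fun_eq_iff)

lemma wact_rev_inverse: "set w \<subseteq> {1..n} \<Longrightarrow> W (rev w) (W w v) = v"
  by (induction w arbitrary: v) (auto simp: wact_append srefl_involutive)

lemma wact_inj: "set w \<subseteq> {1..n} \<Longrightarrow> W w x = W w y \<Longrightarrow> x = y"
  by (metis wact_rev_inverse)

lemma wact_cancel_right:
  assumes "set ys \<subseteq> {1..n}" "W (xs @ ys) = W (zs @ ys)"
  shows "W xs = W zs"
proof
  fix v
  have "W (xs @ ys) (W (rev ys) v) = W (zs @ ys) (W (rev ys) v)"
    using assms(2) by simp
  then show "W xs v = W zs v"
    using wact_rev_inverse[of "rev ys"] assms(1) by (simp add: wact_append)
qed

lemma wact_reflection: "set w \<subseteq> {1..n} \<Longrightarrow> W w (R b v) = R (W w b) (W w v)"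
  by (induction w) (auto simp: srefl_eq_reflection reflection_conj pairing_simple_root_self)

lemma wact_cancel_pair:
  assumes "x \<in> {1..n}" "y \<in> {1..n}" "set Y \<subseteq> {1..n}"
    and "W Y (simple_root y) = (\<lambda>j. - simple_root x j)"
  shows "W (x # Y @ [y]) = W Y"
proof -
  have comm: "W Y (S y v) = S x (W Y v)" for v
    using wact_reflection[OF assms(3), of "simple_root y" v] assms
    by (simp add: srefl_eq_reflection reflection_uminus)
  show ?thesis
  proof
    fix v
    show "W (x # Y @ [y]) v = W Y v"
      using comm srefl_involutive[OF assms(1)] by (simp add: wact_append)
  qed
qed

lemma ell_wact_le: "w \<in> words n \<Longrightarrow> ell n C (W w) \<le> length w"
  unfolding ell_def by (rule Least_le) auto

lemma reduced_beta_distinct: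
  assumes red: "reduced_expr_w0 n C ii" and ab: "1 \<le> a" "a < b" "b \<le> length ii"
  shows "beta n C ii a \<noteq> beta n C ii b"
proof
  assume eq: "beta n C ii a = beta n C ii b"
  define x y where "x = ii ! (a - 1)" and "y = ii ! (b - 1)"
  obtain X Y Z where ii: "ii = X @ x # Y @ y # Z"
    and len: "length X = a - 1" "length Y = b - Suc a"
  proof (rule split_list_at_two[of "a - 1" "b - 1" ii])
    show "a - 1 < b - 1" "b - 1 < length ii"
      using ab by auto
  qed (use ab in \<open>auto simp: x_def y_def\<close>)
  have "set ii \<subseteq> {1..n}"
    using red by (simp add: reduced_expr_w0_def words_def)
  then have in_range: "x \<in> {1..n}" "y \<in> {1..n}" "set X \<subseteq> {1..n}" "set Y \<subseteq> {1..n}"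
    "set Z \<subseteq> {1..n}"
    unfolding ii by auto
  have "beta n C ii a = W X (simple_root x)"
    unfolding beta_def letter_def ii using len by (simp add: nth_append)
  moreover have "take (b - 1) ii = X @ x # Y"
    unfolding ii using len ab by (simp add: take_Cons')
  then have "beta n C ii b = W X (S x (W Y (simple_root y)))"
    unfolding beta_def letter_def y_def by (simp add: wact_append)
  ultimately have "simple_root x = S x (W Y (simple_root y))"
    using eq wact_inj[OF in_range(3)] by metis
  then have "W Y (simple_root y) = (\<lambda>j. - simple_root x j)"
    using srefl_involutive srefl_simple_root_self in_range(1) by metis
  then have "W (x # Y @ [y]) = W Y"
    using wact_cancel_pair in_range by blast
  moreover have "ii = X @ (x # Y @ [y]) @ Z"
    unfolding ii by simp
  ultimately have "W ii = W (X @ Y @ Z)"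
    by (metis wact_append)
  then have "ell n C (W ii) \<le> length ii - 2"
    using ell_wact_le[of "X @ Y @ Z"] in_range len ab unfolding ii by (simp add: words_def)
  moreover have "ell n C (W ii) = length ii"
    using red by (simp add: reduced_expr_w0_def NN_def)
  ultimately show False
    using ab by simp
qed

lemma srefl_adjacent_simple_root:
  assumes "p \<in> {1..n}" "q \<in> {1..n}" "C p q = -1"
  shows "S q (simple_root p) = (\<lambda>j. simple_root p j + simple_root q j)"
  using assms pairing_simple_roots[of p q] by (simp add: srefl_eq_reflection reflection_def)

lemma srefl_adjacent_root_sum:
  assumes "p \<in> {1..n}" "q \<in> {1..n}" "C p q = -1"
  shows "S p (\<lambda>j. simple_root p j + simple_root q j) = simple_root q"
proof -
  have "B (\<lambda>j. simple_root p j + simple_root q j) (simple_root p) = 1"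
    using pairing_diff_left[of "simple_root p" "-1" "simple_root q" "simple_root p"]
      pairing_simple_roots assms cartan_diag cartan_sym by simp
  then show ?thesis
    using assms(1) by (simp add: srefl_eq_reflection reflection_def fun_eq_iff)
qed

end

section \<open>Consecutive occurrences of a letter\<close>

lemma jplus_cases:
  "jplus ii j \<in> {l. j < l \<and> l \<le> length ii \<and> letter ii l = letter ii j} \<union> {length ii + 1}"
  unfolding jplus_def by (rule Min_in) auto

lemma jplus_le_occurrence:
  "j < x \<Longrightarrow> x \<le> length ii \<Longrightarrow> letter ii x = letter ii j \<Longrightarrow> jplus ii j \<le> x"
  unfolding jplus_def by (rule Min_le) auto

lemma jplus_le_Suc_length: "jplus ii j \<le> length ii + 1"
  unfolding jplus_def by (rule Min_le) auto

lemma jplus_greater: "j \<le> length ii \<Longrightarrow> j < jplus ii j"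
  using jplus_cases[of ii j] by auto

lemma jplus_letter: "jplus ii j \<le> length ii \<Longrightarrow> letter ii (jplus ii j) = letter ii j"
  using jplus_cases[of ii j] by auto

lemma jplus_between:
  "j < x \<Longrightarrow> x < jplus ii j \<Longrightarrow> letter ii x \<noteq> letter ii j"
  using jplus_le_occurrence[of j x ii] jplus_le_Suc_length[of ii j] by fastforce

lemma jplus_eqI:
  assumes "j < l" "l \<le> length ii" "letter ii l = letter ii j"
    and "\<And>x. j < x \<Longrightarrow> x < l \<Longrightarrow> letter ii x \<noteq> letter ii j"
  shows "jplus ii j = l"
proof (rule antisym)
  show "jplus ii j \<le> l"
    using jplus_le_occurrence[OF assms(1-3)] .
  show "l \<le> jplus ii j"
    using jplus_cases[of ii j] assms(2,4) by fastforce
qed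

lemma jminus_cases:
  "jminus ii j \<in> {l. 1 \<le> l \<and> l < j \<and> letter ii l = letter ii j} \<union> {0}"
  unfolding jminus_def by (rule Max_in) (auto intro: finite_subset[of _ "{..j}"])

lemma jminus_ge_occurrence:
  "1 \<le> x \<Longrightarrow> x < j \<Longrightarrow> letter ii x = letter ii j \<Longrightarrow> x \<le> jminus ii j"
  unfolding jminus_def by (rule Max_ge) (auto intro: finite_subset[of _ "{..j}"])

lemma jminus_less: "1 \<le> j \<Longrightarrow> jminus ii j < j"
  using jminus_cases[of ii j] by auto

lemma jminus_letter: "1 \<le> jminus ii j \<Longrightarrow> letter ii (jminus ii j) = letter ii j"
  using jminus_cases[of ii j] by auto

lemma jminus_jplus:
  assumes "1 \<le> l" "jplus ii l \<le> length ii"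
  shows "jminus ii (jplus ii l) = l"
proof -
  have "l \<le> jminus ii (jplus ii l)"
    using assms jplus_cases[of ii l] by (intro jminus_ge_occurrence) auto
  moreover have "\<not> l < jminus ii (jplus ii l)"
    using jminus_cases[of ii "jplus ii l"] jplus_between[of l "jminus ii (jplus ii l)" ii]
      jplus_letter[OF assms(2)] by auto
  ultimately show ?thesis
    by simp
qed

lemma jplus_jminus:
  assumes "1 \<le> jminus ii j" "j \<le> length ii"
  shows "jplus ii (jminus ii j) = j"
proof (rule jplus_eqI)
  show "jminus ii j < j" "j \<le> length ii" "letter ii j = letter ii (jminus ii j)"
    using assms jminus_cases[of ii j] by auto
  show "letter ii x \<noteq> letter ii (jminus ii j)" if "jminus ii j < x" "x < j" for x
    using that assms jminus_ge_occurrence[of x j ii] jminus_letter[of ii j] by fastforce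
qed

definition straddling :: "(nat \<Rightarrow> nat \<Rightarrow> int) \<Rightarrow> nat list \<Rightarrow> nat \<Rightarrow> nat set" where
  "straddling C ii j =
     {l. 1 \<le> l \<and> l < j \<and> j < jplus ii l \<and> C (letter ii l) (letter ii j) = -1}"

lemma finite_straddling: "finite (straddling C ii j)"
  unfolding straddling_def by (rule finite_subset[of _ "{..j}"]) auto

locale braid_window =
  fixes C :: "nat \<Rightarrow> nat \<Rightarrow> int" and ii :: "nat list" and k p q :: nat
  assumes window_pos: "1 \<le> k" "k + 2 \<le> length ii"
    and window_letters: "letter ii k = p" "letter ii (k+1) = q" "letter ii (k+2) = p"
    and window_cartan: "C p q = -1" "C q p = -1" "C p p = 2"
begin

lemma window_distinct: "p \<noteq> q"
  using window_cartan by auto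

lemma jplus_window: "jplus ii k = k + 2"
  using window_pos window_letters window_distinct by (intro jplus_eqI) (auto simp: less_Suc_eq)

lemma jminus_window: "jminus ii (k + 2) = k"
  using jminus_jplus[of k ii] window_pos by (simp add: jplus_window)

lemma jplus_middle: "k + 2 < jplus ii (k + 1)"
  using jplus_greater[of "k+1" ii] jplus_letter[of ii "k+1"] window_pos window_letters
    window_distinct by (cases "jplus ii (k+1) = k + 2") auto

lemma jminus_middle_less: "jminus ii (k + 1) < k"
  using jminus_less[of "k+1" ii] jminus_letter[of ii "k+1"] window_pos window_letters
    window_distinct jminus_cases[of ii "k+1"] by (cases "jminus ii (k+1) = k") auto

lemma straddling_window:
  "straddling C ii k - {jminus ii (k+1)} = straddling C ii (k+2) - {k+1}"
proof -
  let ?m = "jminus ii (k+1)"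
  have "l \<in> straddling C ii (k+2)"
    if "l \<in> straddling C ii k" "l \<noteq> ?m" for l
  proof -
    have "jplus ii l \<noteq> k + 1"
      using that jminus_jplus[of l ii] window_pos unfolding straddling_def by force
    moreover have "jplus ii l \<noteq> k + 2"
      using that jplus_letter[of ii l] window_pos window_letters window_cartan
      unfolding straddling_def by force
    ultimately show ?thesis
      using that window_letters unfolding straddling_def by auto
  qed
  moreover have "l \<in> straddling C ii k"
    if "l \<in> straddling C ii (k+2)" "l \<noteq> k + 1" for l
  proof -
    have "l \<noteq> k"
      using that window_letters window_cartan unfolding straddling_def by auto
    then show ?thesis
      using that window_letters unfolding straddling_def by auto
  qed
  moreover have "?m \<notin> straddling C ii (k+2)"
    using jplus_jminus[of ii "k+1"] window_pos unfolding straddling_def by auto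
  moreover have "k + 1 \<notin> straddling C ii k"
    unfolding straddling_def by auto
  ultimately show ?thesis
    by blast
qed

lemma middle_in_straddling: "k + 1 \<in> straddling C ii (k+2)"
  using jplus_middle window_letters window_cartan unfolding straddling_def by auto

lemma jminus_middle_in_straddling:
  "1 \<le> jminus ii (k+1) \<Longrightarrow> jminus ii (k+1) \<in> straddling C ii k"
  using jplus_jminus[of ii "k+1"] jminus_letter[of ii "k+1"] jminus_middle_less window_pos
    window_letters window_cartan unfolding straddling_def by auto

lemma inord_window: "inord C ii k = {jminus ii (k+1)} - {0}"
proof -
  have "inord C ii k = {l. 1 \<le> l \<and> l < k \<and> jplus ii l = k + 1}"
  proof -
    have "C (letter ii l) p = -1" if "jplus ii l = k + 1" "1 \<le> l" for l
      using that jplus_letter[of ii l] window_pos window_letters window_cartan by auto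
    then show ?thesis
      unfolding inord_def jplus_window window_letters by fastforce
  qed
  also have "\<dots> = {jminus ii (k+1)} - {0}"
    using jminus_jplus[of _ ii] jplus_jminus[of ii "k+1"] jminus_middle_less window_pos
    by fastforce
  finally show ?thesis .
qed

end

section \<open>Seeds on a reduced word\<close>

locale reduced_seed = cartan n C
  for n :: nat and C :: "nat \<Rightarrow> nat \<Rightarrow> int" +
  fixes ii :: "nat list" and P :: "nat \<Rightarrow> rprod"
  assumes reduced: "reduced_expr_w0 n C ii"
    and seed: "seed_props n C ii P"
begin

abbreviation "N \<equiv> length ii"
abbreviation "\<beta> \<equiv> beta n C ii"

lemma word_in_range: "set ii \<subseteq> {1..n}"
  using reduced by (simp add: reduced_expr_w0_def words_def)

lemma seed_zero: "P 0 b = 0"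
  using seed by (simp add: seed_props_def)

lemma seed_nonneg: "j \<le> N \<Longrightarrow> 0 \<le> P j b"
  using seed seed_zero[of b] by (cases "j = 0") (auto simp: seed_props_def)

lemma seed_exchange:
  "1 \<le> j \<Longrightarrow> j \<le> N \<Longrightarrow>
     P j b + P (jminus ii j) b = delta_root (\<beta> j) b + (\<Sum>l\<in>straddling C ii j. P l b)"
  using seed unfolding seed_props_def straddling_def by auto

lemma seed_jump_le: "i \<in> {1..N} \<Longrightarrow> \<forall>a\<in>Jex ii. P a (\<beta> i) - P (jplus ii a) (\<beta> i) \<le> 1"
  using seed unfolding seed_props_def by auto

lemma seed_support: "j \<le> N \<Longrightarrow> P j b \<noteq> 0 \<Longrightarrow> b \<in> \<beta> ` {1..j}"
proof (induction j rule: less_induct)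
  case (less j)
  show ?case
  proof (rule ccontr)
    assume b: "b \<notin> \<beta> ` {1..j}"
    have j: "1 \<le> j"
      using less.prems seed_zero by (cases j) auto
    have "delta_root (\<beta> j) b = 0"
      using b j by (auto simp: delta_root_def)
    moreover have "P l b = 0" if "l \<in> straddling C ii j" for l
      using that less.IH[of l] less.prems b unfolding straddling_def by fastforce
    moreover have "0 \<le> P (jminus ii j) b"
      using seed_nonneg[of "jminus ii j" b] jminus_less[OF j, of ii] less.prems(1) by simp
    ultimately have "P j b \<le> 0"
      using seed_exchange[OF j less.prems(1), of b] by simp
    then show False
      using seed_nonneg[OF less.prems(1), of b] less.prems(2) by simp
  qed
qed

lemma seed_vanish:
  assumes "x < z" "z \<le> N" shows "P x (\<beta> z) = 0"
proof (rule ccontr)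
  assume "P x (\<beta> z) \<noteq> 0"
  then obtain l where "l \<in> {1..x}" "\<beta> z = \<beta> l"
    using seed_support[of x "\<beta> z"] assms by auto
  then show False
    using reduced_beta_distinct[OF reduced, of l z] assms by auto
qed

lemma jminus_jump_le:
  assumes jump: "\<forall>a\<in>Jex ii. P a b - P (jplus ii a) b \<le> 1" and y: "1 \<le> y" "y \<le> N"
  shows "P (jminus ii y) b - P y b \<le> 1"
proof (cases "jminus ii y = 0")
  case True
  then show ?thesis
    using seed_zero[of b] seed_nonneg[OF y(2), of b] by simp
next
  case False
  then have "jminus ii y \<in> Jex ii" and "jplus ii (jminus ii y) = y"
    using jplus_jminus[of ii y] jminus_less[of y ii] y unfolding Jex_def by auto
  then show ?thesis
    using jump by force
qed

lemma jminus_jump_deltas_le: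
  assumes jump: "\<forall>a\<in>Jex ii. P a b - P (jplus ii a) b \<le> 1" and y: "1 \<le> y" "y \<le> N"
    and z: "jminus ii y < z" "z \<le> N" and w: "1 \<le> w" "w \<le> N" "w \<noteq> z"
  shows "P (jminus ii y) b - P y b + delta_root (\<beta> z) b - delta_root (\<beta> w) b \<le> 1"
proof (cases "b = \<beta> z")
  case True
  have "\<beta> w \<noteq> \<beta> z"
    using reduced_beta_distinct[OF reduced, of w z] reduced_beta_distinct[OF reduced, of z w] w z
    by (cases "w < z") auto
  then show ?thesis
    using True seed_vanish[OF z] seed_nonneg[OF y(2)] by (simp add: delta_root_def)
next
  case False
  then have "delta_root (\<beta> z) b = 0" "0 \<le> delta_root (\<beta> w) b"
    by (auto simp: delta_root_def)
  then show ?thesis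
    using jminus_jump_le[OF jump y] by simp
qed

end

section \<open>Braid moves\<close>

locale braid_seed = reduced_seed n C ii P
  for n :: nat and C :: "nat \<Rightarrow> nat \<Rightarrow> int" and ii :: "nat list" and P :: "nat \<Rightarrow> rprod" +
  fixes ii' :: "nat list" and k p q :: nat
  assumes reduced': "reduced_expr_w0 n C ii'"
    and braid: "braid_move C ii ii' k p q"
begin

abbreviation "\<beta>' \<equiv> beta n C ii'"

lemma braid_length: "length ii' = N"
  using braid by (simp add: braid_move_def)

lemma braid_pos: "1 \<le> k" "k + 2 \<le> N"
  using braid by (auto simp: braid_move_def)

lemma braid_letters:
  "letter ii k = p" "letter ii (k+1) = q" "letter ii (k+2) = p"
  "letter ii' k = q" "letter ii' (k+1) = p" "letter ii' (k+2) = q"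
  using braid by (auto simp: braid_move_def)

lemma letter_braid_outside:
  "1 \<le> j \<Longrightarrow> j \<le> N \<Longrightarrow> j \<notin> {k, k+1, k+2} \<Longrightarrow> letter ii' j = letter ii j"
  using braid by (auto simp: braid_move_def)

lemma braid_cartan: "p \<in> {1..n}" "q \<in> {1..n}" "C p q = -1" "C q p = -1" "C p p = 2" "C q q = 2"
proof -
  have "ii ! (k - 1) \<in> set ii" "ii ! k \<in> set ii"
    using braid_pos by auto
  then show pq: "p \<in> {1..n}" "q \<in> {1..n}"
    using word_in_range braid_letters unfolding letter_def by auto
  show "C p q = -1"
    using braid by (simp add: braid_move_def)
  then show "C q p = -1" "C p p = 2" "C q q = 2"
    using pq cartan_sym cartan_diag by auto
qed

sublocale old: braid_window C ii k p q
  using braid_pos braid_letters braid_cartan by unfold_locales auto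

sublocale new: braid_window C ii' k q p
  using braid_pos braid_letters braid_cartan braid_length by unfold_locales auto

lemma braid_decomp:
  obtains X Y where "ii = X @ [p, q, p] @ Y" "ii' = X @ [q, p, q] @ Y" "length X = k - 1"
proof
  have same: "ii' ! t = ii ! t" if "t < N" "t \<notin> {k - 1, k, k + 1}" for t
    using letter_braid_outside[of "Suc t"] that braid_pos unfolding letter_def by auto
  have nth: "ii ! (k-1) = p" "ii ! k = q" "ii ! (k+1) = p"
    "ii' ! (k-1) = q" "ii' ! k = p" "ii' ! (k+1) = q"
    using braid_letters braid_pos unfolding letter_def by (simp_all add: add.commute)
  have "take (k-1) ii' = take (k-1) ii"
    using braid_length braid_pos by (intro nth_equalityI) (auto intro!: same)
  moreover have "drop (k+2) ii' = drop (k+2) ii"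
    using braid_length by (intro nth_equalityI) (auto intro!: same)
  moreover have "drop (k-1) xs = xs ! (k-1) # xs ! k # xs ! (k+1) # drop (k+2) xs"
    if "length xs = N" for xs :: "nat list"
  proof -
    have "drop (k - 1 + i) xs = xs ! (k - 1 + i) # drop (k + i) xs" if "i \<le> 2" for i
      using Cons_nth_drop_Suc[of "k - 1 + i" xs] \<open>length xs = N\<close> that braid_pos by simp
    from this[of 0] this[of 1] this[of 2] show ?thesis
      using braid_pos by (simp add: numeral_2_eq_2)
  qed
  ultimately show "ii = take (k-1) ii @ [p, q, p] @ drop (k+2) ii"
    "ii' = take (k-1) ii @ [q, p, q] @ drop (k+2) ii"
    using nth braid_length by (metis append_Cons append_Nil append_take_drop_id)+
  show "length (take (k-1) ii) = k - 1"
    using braid_pos by simp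
qed

lemma wact_braid_prefix: "W (take (k+2) ii') = W (take (k+2) ii)"
proof -
  obtain X Y where ii: "ii = X @ [p, q, p] @ Y" and ii': "ii' = X @ [q, p, q] @ Y"
    and len: "length X = k - 1"
    using braid_decomp .
  have "W ii' = W ii"
    using reduced reduced' by (simp add: reduced_expr_w0_def)
  moreover have "set Y \<subseteq> {1..n}"
    using word_in_range unfolding ii by simp
  ultimately have "W (X @ [q, p, q]) = W (X @ [p, q, p])"
    using wact_cancel_right[of Y "X @ [q, p, q]" "X @ [p, q, p]"] unfolding ii ii' by simp
  moreover have "take (k+2) ii' = X @ [q, p, q]" "take (k+2) ii = X @ [p, q, p]"
    unfolding ii ii' using len braid_pos by simp_all
  ultimately show ?thesis
    by simp
qed

lemma beta_braid_window: "\<beta>' k = \<beta> (k+2)" "\<beta>' (k+1) = \<beta> (k+1)" "\<beta>' (k+2) = \<beta> k"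
proof -
  obtain X Y where ii: "ii = X @ [p, q, p] @ Y" and ii': "ii' = X @ [q, p, q] @ Y"
    and len: "length X = k - 1"
    using braid_decomp .
  have takes: "take (k - 1) ii = X" "take k ii = X @ [p]" "take (k + 1) ii = X @ [p, q]"
    "take (k - 1) ii' = X" "take k ii' = X @ [q]" "take (k + 1) ii' = X @ [q, p]"
    unfolding ii ii' using len braid_pos by (simp_all add: take_Cons')
  have nth: "ii ! (k-1) = p" "ii ! k = q" "ii ! (k+1) = p"
    "ii' ! (k-1) = q" "ii' ! k = p" "ii' ! (k+1) = q"
    using braid_letters braid_pos unfolding letter_def by (simp_all add: add.commute)
  have sum: "S q (simple_root p) = (\<lambda>j. simple_root p j + simple_root q j)"
    "S p (simple_root q) = (\<lambda>j. simple_root p j + simple_root q j)"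
    "S p (\<lambda>j. simple_root p j + simple_root q j) = simple_root q"
    "S q (\<lambda>j. simple_root p j + simple_root q j) = simple_root p"
    using srefl_adjacent_simple_root[of p q] srefl_adjacent_simple_root[of q p]
      srefl_adjacent_root_sum[of p q] srefl_adjacent_root_sum[of q p] braid_cartan
    by (simp_all add: add.commute)
  show "\<beta>' k = \<beta> (k+2)" "\<beta>' (k+1) = \<beta> (k+1)" "\<beta>' (k+2) = \<beta> k"
    using takes nth sum braid_pos
    by (simp_all add: beta_def letter_def wact_append numeral_2_eq_2)
qed

lemma beta_braid_outside:
  assumes i: "1 \<le> i" "i \<le> N" "i \<notin> {k, k+1, k+2}"
  shows "\<beta>' i = \<beta> i"
proof -
  obtain X Y where ii: "ii = X @ [p, q, p] @ Y" and ii': "ii' = X @ [q, p, q] @ Y"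
    and len: "length X = k - 1"
    using braid_decomp .
  have "W (take (i - 1) ii') = W (take (i - 1) ii)"
  proof (cases "i < k")
    case True
    then show ?thesis
      unfolding ii ii' using len by simp
  next
    case False
    define r where "r = i - 1 - (k + 2)"
    have r: "i - 1 = (k + 2) + r"
      using False i unfolding r_def by auto
    have "drop (k+2) ii' = drop (k+2) ii"
      unfolding ii ii' using len braid_pos by simp
    then have "take (i - 1) ii' = take (k+2) ii' @ take r (drop (k+2) ii)"
      "take (i - 1) ii = take (k+2) ii @ take r (drop (k+2) ii)"
      unfolding r take_add by simp_all
    then show ?thesis
      using wact_braid_prefix by (simp add: wact_append)
  qed
  then show ?thesis
    using letter_braid_outside[OF i] by (simp add: beta_def)
qed

lemma beta_braid_mem:
  assumes i: "i \<in> {1..N}" shows "\<beta>' i \<in> \<beta> ` {1..N}"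
proof (cases "i \<in> {k, k+1, k+2}")
  case True
  then have "\<beta>' i \<in> \<beta> ` {k, k+1, k+2}"
    using beta_braid_window by auto
  moreover have "{k, k+1, k+2} \<subseteq> {1..N}"
    using braid_pos by auto
  ultimately show ?thesis
    by blast
next
  case False
  then show ?thesis
    using beta_braid_outside[of i] i by auto
qed

lemma jminus_braid: "jminus ii' k = jminus ii (k+1)" "jminus ii' (k+1) = jminus ii k"
proof -
  have same: "letter ii' l = letter ii l" if "1 \<le> l" "l < k" for l
    using letter_braid_outside[of l] that braid_pos by auto
  have "{l. 1 \<le> l \<and> l < k \<and> letter ii' l = letter ii' k}
      = {l. 1 \<le> l \<and> l < k + 1 \<and> letter ii l = letter ii (k+1)}"
    using same braid_letters old.window_distinct by (auto simp: less_Suc_eq)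
  then show "jminus ii' k = jminus ii (k+1)"
    unfolding jminus_def by simp
  have "{l. 1 \<le> l \<and> l < k + 1 \<and> letter ii' l = letter ii' (k+1)}
      = {l. 1 \<le> l \<and> l < k \<and> letter ii l = letter ii k}"
    using same braid_letters old.window_distinct by (auto simp: less_Suc_eq)
  then show "jminus ii' (k+1) = jminus ii k"
    unfolding jminus_def by simp
qed

lemma letter_braid_swp: "1 \<le> x \<Longrightarrow> x \<le> N \<Longrightarrow> x \<noteq> k \<Longrightarrow> letter ii' x = letter ii (swp k x)"
  using letter_braid_outside[of x] braid_letters by (auto simp: swp_def)

lemma jplus_braid_swp:
  assumes j: "j \<in> Jex ii'" "j \<noteq> k" and J: "jplus ii' j \<notin> {k, k+1}"
  shows "jplus ii (swp k j) = swp k (jplus ii' j)"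
proof -
  let ?J = "jplus ii' j"
  have j_range: "1 \<le> j" "?J \<le> N"
    using j braid_length unfolding Jex_def by auto
  have J_gt: "j < ?J" and J_letter: "letter ii' ?J = letter ii' j"
    using jplus_cases[of ii' j] j_range braid_length by auto
  have between: "letter ii' y \<noteq> letter ii' j" if "j < y" "y < ?J" for y
    using jplus_between that by blast
  have "?J \<noteq> k + 2"
    using between[of k] J_gt J_letter braid_letters new.window_distinct j(2)
    by (cases "j < k") (auto simp: less_Suc_eq)
  then have J_fixed: "swp k ?J = ?J"
    using J by (simp add: swp_def)
  show ?thesis
    unfolding J_fixed
  proof (rule jplus_eqI)
    show "swp k j < ?J" "?J \<le> N"
      using J_gt j_range J \<open>?J \<noteq> k + 2\<close> by (auto simp: swp_def)
    show "letter ii ?J = letter ii (swp k j)"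
      using letter_braid_swp[of ?J] letter_braid_swp[of j] J_letter J_fixed J_gt j_range j(2) J
      by auto
    show "letter ii y \<noteq> letter ii (swp k j)" if y: "swp k j < y" "y < ?J" for y
    proof -
      have "letter ii (swp k j) = letter ii' j"
        using letter_braid_swp[of j] J_gt j_range j(2) by simp
      moreover have "letter ii y \<noteq> letter ii' j"
      proof (cases "y \<in> {k, k+1, k+2}")
        case True
        then show ?thesis
          using y J between[of k] between[of "k+1"] braid_letters new.window_distinct j(2)
          by (auto simp: swp_def split: if_splits)
      next
        case False
        then show ?thesis
          using y between[of y] letter_braid_outside[of y] j_range
          by (auto simp: swp_def split: if_splits)
      qed
      ultimately show ?thesis
        by simp
    qed
  qed
qed

lemma Pnew_swp: "j \<noteq> k \<Longrightarrow> Pnew n C ii P k j b = P (swp k j) b"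
  unfolding Pnew_def by simp

lemma Pnew_window:
  "Pnew n C ii P k k b = delta_root (\<beta> k) b + P (k+2) b + P (jminus ii (k+1)) b
     - delta_root (\<beta> (k+1)) b - P k b"
  using seed_zero[of b] unfolding Pnew_def old.inord_window old.jplus_window
  by (cases "jminus ii (k+1) = 0") auto

lemma seed_exchange_window:
  "P (jminus ii k) b - P (k+2) b
     = P (jminus ii (k+1)) b - P (k+1) b + delta_root (\<beta> k) b - delta_root (\<beta> (k+2)) b"
proof -
  let ?m = "jminus ii (k+1)" and ?sum = "\<lambda>A. \<Sum>l\<in>A. P l b"
  have "?sum (straddling C ii k) = ?sum (straddling C ii k - {?m}) + P ?m b"
  proof (cases "?m = 0")
    case True
    then have "?m \<notin> straddling C ii k"
      unfolding straddling_def by simp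
    then show ?thesis
      using True seed_zero[of b] by simp
  next
    case False
    then show ?thesis
      using old.jminus_middle_in_straddling sum.remove[OF finite_straddling, of ?m C ii k]
      by (simp add: add.commute)
  qed
  moreover have "?sum (straddling C ii (k+2)) = ?sum (straddling C ii (k+2) - {k+1}) + P (k+1) b"
    using sum.remove[OF finite_straddling old.middle_in_straddling] by (simp add: add.commute)
  moreover have "P k b + P (jminus ii k) b = delta_root (\<beta> k) b + ?sum (straddling C ii k)"
    using seed_exchange[of k b] braid_pos by simp
  moreover have "P (k+2) b + P k b = delta_root (\<beta> (k+2)) b + ?sum (straddling C ii (k+2))"
    using seed_exchange[of "k+2" b] braid_pos old.jminus_window by simp
  ultimately show ?thesis
    using old.straddling_window by simp
qed

lemma Pnew_jump_from_window_le:
  assumes jump: "\<forall>a\<in>Jex ii. P a b - P (jplus ii a) b \<le> 1"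
  shows "Pnew n C ii P k k b - Pnew n C ii P k (k+2) b \<le> 1"
proof -
  have "Pnew n C ii P k (k+2) b = P (k+1) b"
    using Pnew_swp[of "k+2"] by (simp add: swp_def)
  then have "Pnew n C ii P k k b - Pnew n C ii P k (k+2) b
      = P (jminus ii k) b - P k b + delta_root (\<beta> (k+2)) b - delta_root (\<beta> (k+1)) b"
    using Pnew_window[of b] seed_exchange_window[of b] by linarith
  also have "\<dots> \<le> 1"
    using jminus_jump_deltas_le[OF jump, of k "k+2" "k+1"] jminus_less[of k ii] braid_pos by simp
  finally show ?thesis .
qed

lemma Pnew_jump_to_window_le:
  assumes jump: "\<forall>a\<in>Jex ii. P a b - P (jplus ii a) b \<le> 1"
  shows "Pnew n C ii P k (jminus ii (k+1)) b - Pnew n C ii P k k b \<le> 1"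
proof -
  have "Pnew n C ii P k (jminus ii (k+1)) b = P (jminus ii (k+1)) b"
    using Pnew_swp old.jminus_middle_less by (simp add: swp_def)
  then have "Pnew n C ii P k (jminus ii (k+1)) b - Pnew n C ii P k k b
      = P k b - P (k+2) b + delta_root (\<beta> (k+1)) b - delta_root (\<beta> k) b"
    using Pnew_window[of b] by linarith
  also have "\<dots> \<le> 1"
    using jminus_jump_deltas_le[OF jump, of "k+2" "k+1" k] old.jminus_window braid_pos by simp
  finally show ?thesis .
qed

lemma Pnew_jump_to_middle_le:
  assumes jump: "\<forall>a\<in>Jex ii. P a b - P (jplus ii a) b \<le> 1"
  shows "Pnew n C ii P k (jminus ii k) b - Pnew n C ii P k (k+1) b \<le> 1"
proof -
  have "jminus ii k < k"
    using jminus_less braid_pos by simp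
  then have "Pnew n C ii P k (jminus ii k) b - Pnew n C ii P k (k+1) b
      = P (jminus ii k) b - P (k+2) b"
    using Pnew_swp by (simp add: swp_def)
  also have "\<dots> = P (jminus ii (k+1)) b - P (k+1) b + delta_root (\<beta> k) b - delta_root (\<beta> (k+2)) b"
    by (rule seed_exchange_window)
  also have "\<dots> \<le> 1"
    using jminus_jump_deltas_le[OF jump, of "k+1" k "k+2"] old.jminus_middle_less braid_pos
    by simp
  finally show ?thesis .
qed

lemma Pnew_jump_le:
  assumes jump: "\<forall>a\<in>Jex ii. P a b - P (jplus ii a) b \<le> 1" and j: "j \<in> Jex ii'"
  shows "Pnew n C ii P k j b - Pnew n C ii P k (jplus ii' j) b \<le> 1"
proof -
  have j_range: "1 \<le> j" "j \<le> N" "jplus ii' j \<le> N"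
    using j braid_length unfolding Jex_def by auto
  consider (from_window) "j = k" | (to_window) "jplus ii' j = k" | (to_middle) "jplus ii' j = k + 1"
    | (swapped) "j \<noteq> k" "jplus ii' j \<notin> {k, k+1}"
    by blast
  then show ?thesis
  proof cases
    case from_window
    then show ?thesis
      using Pnew_jump_from_window_le[OF jump] new.jplus_window by simp
  next
    case to_window
    then have "j = jminus ii (k+1)"
      using jminus_jplus[of j ii'] jminus_braid(1) j_range braid_length by simp
    then show ?thesis
      using Pnew_jump_to_window_le[OF jump] to_window by simp
  next
    case to_middle
    then have "j = jminus ii k"
      using jminus_jplus[of j ii'] jminus_braid(2) j_range braid_length by simp
    then show ?thesis
      using Pnew_jump_to_middle_le[OF jump] to_middle by simp
  next
    case swapped
    then have "jplus ii (swp k j) = swp k (jplus ii' j)"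
      using jplus_braid_swp j by blast
    moreover have "swp k j \<in> Jex ii"
      using calculation j_range braid_pos unfolding Jex_def by (auto simp: swp_def)
    ultimately show ?thesis
      using jump swapped Pnew_swp by fastforce
  qed
qed

end

theorem proposition6p9:
  fixes n :: nat and C :: "nat \<Rightarrow> nat \<Rightarrow> int"
    and ii ii' :: "nat list" and k p q :: nat and P :: "nat \<Rightarrow> rvec \<Rightarrow> int"
  assumes "simply_laced_cartan n C"
    and "reduced_expr_w0 n C ii" and "reduced_expr_w0 n C ii'"
    and "braid_move C ii ii' k p q"
    and "seed_props n C ii P"
  shows "\<forall>i\<in>{1..NN n C}. \<forall>j\<in>Jex ii'.
           Pnew n C ii P k j (beta n C ii' i) - Pnew n C ii P k (jplus ii' j) (beta n C ii' i) \<le> 1"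
proof -
  interpret braid_seed n C ii P ii' k p q
    using assms by unfold_locales (auto simp: simply_laced_cartan_def)
  have NN: "NN n C = N"
    using assms(2) by (simp add: reduced_expr_w0_def)
  show ?thesis
  proof (intro ballI)
    fix i j
    assume "i \<in> {1..NN n C}" and j: "j \<in> Jex ii'"
    then obtain i' where "i' \<in> {1..N}" and "\<beta>' i = \<beta> i'"
      using beta_braid_mem NN by force
    then show "Pnew n C ii P k j (\<beta>' i) - Pnew n C ii P k (jplus ii' j) (\<beta>' i) \<le> 1"
      using Pnew_jump_le[OF seed_jump_le j] by simp
  qed
qed

end
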